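(* Let $T:\mathbb N\to\mathbb N$ satisfy $T(n)\ge n$ for all $n$. For a well-typed program $p$ and input $\tilde v$ write $n=\mathrm{sz}(\tilde v)$. The following three statements are equivalent: (1) every well-typed CorePolyC program $p$ satisfies $\mathrm{ic}(p,\tilde v)=O(T(n))$; (2) every well-typed CorePolyC program $p$ satisfies $\mathrm{sz}([\![p]\!](\tilde v))=O(T(n))$; (3) every well-typed CorePolyC program $p$ satisfies $\mathrm{sz}(\mathscr E_{p,\tilde v})=O(T(n))$. (Here the constants in $O(\cdot)$ may depend on $p$ but not on $\tilde v$.)
   Context: CorePolyC. Types are $\mathtt{iint},\mathtt{int},\mathtt{bool}$; $\mathsf{Int}=\{\mathtt{iint},\mathtt{int}\}$, ordered by $\mathtt{iint}\preccurlyeq\mathtt{int}$. Values are unbounded integers ($\mathbb Z$) and booleans $\#t,\#f$. Expressions: variables $x$; constants (nonempty decimal digit strings denoting natural numbers; $\mathtt{true}$, $\mathtt{false}$); operator applications $\mathtt{op}(e_1,\dots,e_m)$; parenthesized $(e)$. Operators and semantics: unary $-$ (negation); binary $+,-,/,\%$ (integer addition, subtraction, division, remainder, with division and remainder by $0$ returning $0$); $\mathtt{size}$, with $\mathtt{size}(v)=\lceil\log_2(\mathrm{abs}(v)+1)\rceil$; comparisons $\texttt{>=},\texttt{<=},\texttt{>},\texttt{<},\texttt{==},\texttt{!=}$ on integers returning booleans; boolean $\texttt{!},\texttt{\&\&},\texttt{||}$. Statements: declaration $t\ x;$; assignment $x=e;$; block $\{s_1\dots s_m\}$; conditional $\mathbf{if}(e)\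 s_1\ \mathbf{else}\ s_2$; loop $\mathbf{for}(x<\mathtt{size}(e))\ s$ (loop bounds are always syntactically of the form $\mathtt{size}(e)$). A program is $\mathbf{int\ main}(\mathbf{int}\ x_1,\dots,\mathbf{int}\ x_m)\{s_1\dots s_k\ \mathbf{return}\ e;\}$. Semantics (big-step). A store $\Sigma$ is a finite partial map from variables to values; $\Sigma[x\mapsto v]$ is the update. $\Sigma\vdash e\Downarrow v$: a variable $x\in\mathrm{dom}\,\Sigma$ evaluates to $\Sigma(x)$, constants to their value, $\mathtt{op}(e_1,\dots,e_m)$ to $\mathtt{op}$ applied to the values of the $e_i$. $\Sigma\vdash s\Downarrow\Sigma'$: $t\ x;$ gives $\Sigma[x\mapsto 0]$ if $t\in\mathsf{Int}$ and $\Sigma[x\mapsto\#f]$ if $t=\mathtt{bool}$; $x=e;$ (with $x\in\mathrm{dom}\,\Sigma$) gives $\Sigma[x\mapsto v]$ where $\Sigma\vdash e\Downarrow v$; a sequence or block executes its statements in order threading the store (a block returns the final store); a conditional evaluates its guard to a boolean and executes the corresponding branch; $\mathbf{for}(x<e)\ s$ evaluates $e$ once to an integer $i$, sets $\Sigma_0=\Sigma$, executes $s$ from $\Sigma_j[x\mapsto j]$ obtaining $\Sigma_{j+1}$ for $j=0,\dots,i-1$, and ends in $\Sigma_i$ (i.e. in $\Sigma$ if $i\le 0$). A program on inputs $v_1,\dots,v_m$ runs its statements from the store $[x_1\mapsto v_1,\dots,x_m\mapsto v_m]$ and outputs the value of its return expression in the resulting store. Type system. A typing environment $\Gamma$ is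 a finite partial map from variables to types; $\ell\in\{\#t,\#f\}$ is the loop indicator. Expression typing $\Gamma,\ell\vdash e:t$: a variable $x\in\mathrm{dom}\,\Gamma$ has type $\Gamma(x)$; digit literals have type $\mathtt{iint}$, $\mathtt{true},\mathtt{false}$ have type $\mathtt{bool}$; $\texttt{!},\texttt{\&\&},\texttt{||}$ take $\mathtt{bool}$ arguments to $\mathtt{bool}$; comparisons take arguments with types in $\mathsf{Int}$ to $\mathtt{bool}$; $+,-,/,\%$ take arguments with types in $\mathsf{Int}$ to their supremum under $\preccurlyeq$ ($\mathtt{iint}$ iff all arguments are $\mathtt{iint}$); $\mathtt{size}$ takes only an $\mathtt{iint}$ argument, giving $\mathtt{iint}$; parentheses preserve types. Statement typing $\Gamma,\ell\vdash s:\Gamma'$: $t\ x;$ is typable iff $x\notin\mathrm{dom}\,\Gamma$ and not($\ell=\#t$ and $t=\mathtt{iint}$), giving $\Gamma[x\mapsto t]$; $x=e;$ is typable iff $x\in\mathrm{dom}\,\Gamma$, not($\ell=\#t$ and $\Gamma(x)=\mathtt{iint}$), and $\Gamma,\ell\vdash e:t$ with $t,\Gamma(x)$ both in $\mathsf{Int}$ or both $\mathtt{bool}$, giving $\Gamma$; a sequence $s_1\dots s_m$ threads $\Gamma_0=\Gamma$, $\Gamma_{i-1},\ell\vdash s_i:\Gamma_i$, giving $\Gamma_m$; a block $\{\tilde s\}$ is typable if its sequence is, giving $\Gamma$; a conditional needs a guard of type $\mathtt{bool}$ and both branches typable under $\Gamma,\ell$, giving $\Gamma$; $\mathbf{for}(x<e)\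 s$ needs $\Gamma,\ell\vdash e:\mathtt{iint}$, $x\notin\mathrm{dom}\,\Gamma$, and $\Gamma[x\mapsto\mathtt{iint}],\#t\vdash s:\Gamma'$ for some $\Gamma'$, giving $\Gamma$. A program is well-typed if its statements are typable starting from $[x_1\mapsto\mathtt{int},\dots,x_m\mapsto\mathtt{int}]$ with $\ell=\#f$, ending in some $\Gamma'$, and its return expression has a type in $\mathsf{Int}$ under $\Gamma',\#f$. A well-typed program $p$ with $m$ inputs computes a total function $[\![p]\!]:\mathbb Z^m\to\mathbb Z$. Sizes: $\mathrm{sz}(v)=\lceil\log_2(\mathrm{abs}(v)+1)\rceil$ for $v\in\mathbb Z$, $\mathrm{sz}(\#t)=\mathrm{sz}(\#f)=1$, $\mathrm{sz}(v_1,\dots,v_m)=\sum_i\mathrm{sz}(v_i)$, and $\mathrm{sz}(\Sigma)=\max_{x\in\mathrm{dom}\,\Sigma}\mathrm{sz}(\Sigma(x))$ ($0$ if empty). $\mathscr E_{p,\tilde v}$ is the (unique) semantic derivation tree of the run of $p$ on input $\tilde v$, and $\mathrm{sz}(\mathscr E_{p,\tilde v})$ is the maximum of $\mathrm{sz}(\Sigma')$ over all stores $\Sigma'$ occurring in it (the largest intermediate value). Instruction count (cost semantics) $\mathrm{ic}$: a variable or constant costs $1$; a parenthesized expression costs $1$ plus its content; $\mathtt{op}(e_1,\dots,e_m)$ costs $1$ plus the costs of the $e_i$; a declaration costs $1$; an assignment costs $1$ plus the cost of its expression; a block costs $1$ plus the cost of its sequence; a sequence costs the sum of its statements' costs; a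 conditional costs the guard's cost plus the cost of the executed branch; a loop costs the cost of evaluating its bound plus the sum of the costs of all executed iterations of its body; a program costs its statements' cost plus the cost of its return expression. $\mathrm{ic}(p,\tilde v)$ is the cost of running $p$ on $\tilde v$. *)

theory Defs
  imports Complex_Main "HOL-Library.Signed_Division"
begin

datatype ty = TIInt | TInt | TBool

definition int_tys :: "ty set" where "int_tys = {TIInt, TInt}"

text \<open>supremum w.r.t. iint below int (only used on int types)\<close>
fun tsup :: "ty \<Rightarrow> ty \<Rightarrow> ty" where
  "tsup TIInt TIInt = TIInt"
| "tsup _ _ = TInt"

datatype val = IntV int | BoolV bool

text \<open>OMinus is used both as unary negation (one argument) and binary subtraction (two).\<close>
datatype oper = OMinus | OPlus | ODiv | OMod | OSize
  | OGe | OLe | OGt | OLt | OEq | ONe | ONot | OAnd | OOr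

datatype exp = Var string | Num nat | TrueC | FalseC | Op oper "exp list" | Paren exp

text \<open>For x e s stands for the loop  for(x < size(e)) s  (bounds are always size(e)).\<close>
datatype stmt = Decl ty string | Assign string exp | Block "stmt list"
  | If exp stmt stmt | For string exp stmt

record prog = params :: "string list" body :: "stmt list" ret :: exp

definition bound_exp :: "exp \<Rightarrow> exp" where "bound_exp e = Op OSize [e]"

definition sz_int :: "int \<Rightarrow> nat" where
  "sz_int v = nat \<lceil>log 2 (real_of_int (\<bar>v\<bar> + 1))\<rceil>"

fun sz_val :: "val \<Rightarrow> nat" where
  "sz_val (IntV v) = sz_int v"
| "sz_val (BoolV b) = 1"

definition sz_inputs :: "int list \<Rightarrow> nat" where
  "sz_inputs vs = sum_list (map sz_int vs)"

type_synonym store = "string \<Rightarrow> val option"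

definition sz_store :: "store \<Rightarrow> nat" where
  "sz_store \<Sigma> = Max (insert 0 (sz_val ` ran \<Sigma>))"

definition cdiv :: "int \<Rightarrow> int \<Rightarrow> int" where
  "cdiv a b = (if b = 0 then 0 else a sdiv b)"
definition cmod :: "int \<Rightarrow> int \<Rightarrow> int" where
  "cmod a b = (if b = 0 then 0 else a smod b)"

definition int2 :: "(int \<Rightarrow> int \<Rightarrow> val) \<Rightarrow> val list \<Rightarrow> val option" where
  "int2 g vs = (case vs of [IntV a, IntV b] \<Rightarrow> Some (g a b) | _ \<Rightarrow> None)"
definition int1 :: "(int \<Rightarrow> val) \<Rightarrow> val list \<Rightarrow> val option" where
  "int1 g vs = (case vs of [IntV a] \<Rightarrow> Some (g a) | _ \<Rightarrow> None)"
definition bool2 :: "(bool \<Rightarrow> bool \<Rightarrow> bool) \<Rightarrow> val list \<Rightarrow> val option" where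
  "bool2 g vs = (case vs of [BoolV a, BoolV b] \<Rightarrow> Some (BoolV (g a b)) | _ \<Rightarrow> None)"

fun apply_op :: "oper \<Rightarrow> val list \<Rightarrow> val option" where
  "apply_op OMinus vs = (if length vs = 1 then int1 (\<lambda>a. IntV (- a)) vs
                         else int2 (\<lambda>a b. IntV (a - b)) vs)"
| "apply_op OPlus vs = int2 (\<lambda>a b. IntV (a + b)) vs"
| "apply_op ODiv vs = int2 (\<lambda>a b. IntV (cdiv a b)) vs"
| "apply_op OMod vs = int2 (\<lambda>a b. IntV (cmod a b)) vs"
| "apply_op OSize vs = int1 (\<lambda>a. IntV (int (sz_int a))) vs"
| "apply_op OGe vs = int2 (\<lambda>a b. BoolV (a \<ge> b)) vs"
| "apply_op OLe vs = int2 (\<lambda>a b. BoolV (a \<le> b)) vs"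
| "apply_op OGt vs = int2 (\<lambda>a b. BoolV (a > b)) vs"
| "apply_op OLt vs = int2 (\<lambda>a b. BoolV (a < b)) vs"
| "apply_op OEq vs = int2 (\<lambda>a b. BoolV (a = b)) vs"
| "apply_op ONe vs = int2 (\<lambda>a b. BoolV (a \<noteq> b)) vs"
| "apply_op ONot vs = (case vs of [BoolV a] \<Rightarrow> Some (BoolV (\<not> a)) | _ \<Rightarrow> None)"
| "apply_op OAnd vs = bool2 (\<and>) vs"
| "apply_op OOr vs = bool2 (\<or>) vs"

fun eval :: "store \<Rightarrow> exp \<Rightarrow> val option" where
  "eval \<Sigma> (Var x) = \<Sigma> x"
| "eval \<Sigma> (Num n) = Some (IntV (int n))"
| "eval \<Sigma> TrueC = Some (BoolV True)"
| "eval \<Sigma> FalseC = Some (BoolV False)"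
| "eval \<Sigma> (Op f es) = Option.bind (those (map (eval \<Sigma>) es)) (apply_op f)"
| "eval \<Sigma> (Paren e) = eval \<Sigma> e"

fun ecost :: "exp \<Rightarrow> nat" where
  "ecost (Var x) = 1"
| "ecost (Num n) = 1"
| "ecost TrueC = 1"
| "ecost FalseC = 1"
| "ecost (Op f es) = 1 + sum_list (map ecost es)"
| "ecost (Paren e) = 1 + ecost e"

text \<open>exec \<Sigma> s \<Sigma>' c m: running s from \<Sigma> ends in \<Sigma>', costs c instructions, and m is
  the maximum of sz over all stores occurring in the derivation tree.\<close>

definition default_val :: "ty \<Rightarrow> val" where
  "default_val t = (if t = TBool then BoolV False else IntV 0)"

inductive exec :: "store \<Rightarrow> stmt \<Rightarrow> store \<Rightarrow> nat \<Rightarrow> nat \<Rightarrow> bool"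
  and execs :: "store \<Rightarrow> stmt list \<Rightarrow> store \<Rightarrow> nat \<Rightarrow> nat \<Rightarrow> bool"
  and exec_loop :: "string \<Rightarrow> stmt \<Rightarrow> int \<Rightarrow> int \<Rightarrow> store \<Rightarrow> store \<Rightarrow> nat \<Rightarrow> nat \<Rightarrow> bool"
where
  ExDecl: "\<Sigma>' = \<Sigma>(x \<mapsto> default_val t) \<Longrightarrow>
     exec \<Sigma> (Decl t x) \<Sigma>' 1 (max (sz_store \<Sigma>) (sz_store \<Sigma>'))"
| ExAssign: "x \<in> dom \<Sigma> \<Longrightarrow> eval \<Sigma> e = Some v \<Longrightarrow> \<Sigma>' = \<Sigma>(x \<mapsto> v) \<Longrightarrow>
     exec \<Sigma> (Assign x e) \<Sigma>' (1 + ecost e) (max (sz_store \<Sigma>) (sz_store \<Sigma>'))"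
| ExBlock: "execs \<Sigma> ss \<Sigma>' c m \<Longrightarrow>
     exec \<Sigma> (Block ss) \<Sigma>' (1 + c) (max (sz_store \<Sigma>) m)"
| ExIfT: "eval \<Sigma> e = Some (BoolV True) \<Longrightarrow> exec \<Sigma> s1 \<Sigma>' c m \<Longrightarrow>
     exec \<Sigma> (If e s1 s2) \<Sigma>' (ecost e + c) (max (sz_store \<Sigma>) m)"
| ExIfF: "eval \<Sigma> e = Some (BoolV False) \<Longrightarrow> exec \<Sigma> s2 \<Sigma>' c m \<Longrightarrow>
     exec \<Sigma> (If e s1 s2) \<Sigma>' (ecost e + c) (max (sz_store \<Sigma>) m)"
| ExFor: "eval \<Sigma> (bound_exp e) = Some (IntV i) \<Longrightarrow> exec_loop x s 0 i \<Sigma> \<Sigma>' c m \<Longrightarrow>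
     exec \<Sigma> (For x e s) \<Sigma>' (ecost (bound_exp e) + c) (max (sz_store \<Sigma>) m)"
| ExNil: "execs \<Sigma> [] \<Sigma> 0 (sz_store \<Sigma>)"
| ExCons: "exec \<Sigma> s \<Sigma>1 c1 m1 \<Longrightarrow> execs \<Sigma>1 ss \<Sigma>' c2 m2 \<Longrightarrow>
     execs \<Sigma> (s # ss) \<Sigma>' (c1 + c2) (max m1 m2)"
| LoopDone: "\<not> j < i \<Longrightarrow> exec_loop x s j i \<Sigma> \<Sigma> 0 (sz_store \<Sigma>)"
| LoopStep: "j < i \<Longrightarrow> exec (\<Sigma>(x \<mapsto> IntV j)) s \<Sigma>1 c1 m1 \<Longrightarrow>
     exec_loop x s (j + 1) i \<Sigma>1 \<Sigma>' c2 m2 \<Longrightarrow>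
     exec_loop x s j i \<Sigma> \<Sigma>' (c1 + c2) (max (sz_store \<Sigma>) (max m1 m2))"

text \<open>run p vs v c m: program p on input vs outputs v, with ic(p,vs) = c and
  sz of the derivation tree = m.\<close>
inductive run :: "prog \<Rightarrow> int list \<Rightarrow> int \<Rightarrow> nat \<Rightarrow> nat \<Rightarrow> bool" where
  "length vs = length (params p) \<Longrightarrow>
   \<Sigma>0 = Map.empty (params p [\<mapsto>] map IntV vs) \<Longrightarrow>
   execs \<Sigma>0 (body p) \<Sigma>' c m \<Longrightarrow>
   eval \<Sigma>' (ret p) = Some (IntV v) \<Longrightarrow>
   run p vs v (c + ecost (ret p)) (max (sz_store \<Sigma>0) m)"

type_synonym env = "string \<Rightarrow> ty option"

inductive has_ty :: "env \<Rightarrow> bool \<Rightarrow> exp \<Rightarrow> ty \<Rightarrow> bool" where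
  TyVar: "\<Gamma> x = Some t \<Longrightarrow> has_ty \<Gamma> l (Var x) t"
| TyNum: "has_ty \<Gamma> l (Num n) TIInt"
| TyTrue: "has_ty \<Gamma> l TrueC TBool"
| TyFalse: "has_ty \<Gamma> l FalseC TBool"
| TyNot: "has_ty \<Gamma> l e TBool \<Longrightarrow> has_ty \<Gamma> l (Op ONot [e]) TBool"
| TyBool2: "f \<in> {OAnd, OOr} \<Longrightarrow> has_ty \<Gamma> l e1 TBool \<Longrightarrow> has_ty \<Gamma> l e2 TBool \<Longrightarrow>
     has_ty \<Gamma> l (Op f [e1, e2]) TBool"
| TyCmp: "f \<in> {OGe, OLe, OGt, OLt, OEq, ONe} \<Longrightarrow> has_ty \<Gamma> l e1 t1 \<Longrightarrow> has_ty \<Gamma> l e2 t2 \<Longrightarrow>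
     t1 \<in> int_tys \<Longrightarrow> t2 \<in> int_tys \<Longrightarrow> has_ty \<Gamma> l (Op f [e1, e2]) TBool"
| TyNeg: "has_ty \<Gamma> l e t \<Longrightarrow> t \<in> int_tys \<Longrightarrow> has_ty \<Gamma> l (Op OMinus [e]) t"
| TyArith: "f \<in> {OPlus, OMinus, ODiv, OMod} \<Longrightarrow> has_ty \<Gamma> l e1 t1 \<Longrightarrow> has_ty \<Gamma> l e2 t2 \<Longrightarrow>
     t1 \<in> int_tys \<Longrightarrow> t2 \<in> int_tys \<Longrightarrow> has_ty \<Gamma> l (Op f [e1, e2]) (tsup t1 t2)"
| TySize: "has_ty \<Gamma> l e TIInt \<Longrightarrow> has_ty \<Gamma> l (Op OSize [e]) TIInt"
| TyParen: "has_ty \<Gamma> l e t \<Longrightarrow> has_ty \<Gamma> l (Paren e) t"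

definition compat :: "ty \<Rightarrow> ty \<Rightarrow> bool" where
  "compat t t' = ((t \<in> int_tys \<and> t' \<in> int_tys) \<or> (t = TBool \<and> t' = TBool))"

inductive st_ty :: "env \<Rightarrow> bool \<Rightarrow> stmt \<Rightarrow> env \<Rightarrow> bool"
  and seq_ty :: "env \<Rightarrow> bool \<Rightarrow> stmt list \<Rightarrow> env \<Rightarrow> bool"
where
  TDecl: "\<Gamma> x = None \<Longrightarrow> \<not> (l \<and> t = TIInt) \<Longrightarrow> st_ty \<Gamma> l (Decl t x) (\<Gamma>(x \<mapsto> t))"
| TAssign: "\<Gamma> x = Some tx \<Longrightarrow> \<not> (l \<and> tx = TIInt) \<Longrightarrow> has_ty \<Gamma> l e t \<Longrightarrow> compat t tx \<Longrightarrow>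
     st_ty \<Gamma> l (Assign x e) \<Gamma>"
| TBlock: "seq_ty \<Gamma> l ss \<Gamma>' \<Longrightarrow> st_ty \<Gamma> l (Block ss) \<Gamma>"
| TIf: "has_ty \<Gamma> l e TBool \<Longrightarrow> st_ty \<Gamma> l s1 \<Gamma>1 \<Longrightarrow> st_ty \<Gamma> l s2 \<Gamma>2 \<Longrightarrow>
     st_ty \<Gamma> l (If e s1 s2) \<Gamma>"
| TFor: "has_ty \<Gamma> l (bound_exp e) TIInt \<Longrightarrow> \<Gamma> x = None \<Longrightarrow>
     st_ty (\<Gamma>(x \<mapsto> TIInt)) True s \<Gamma>' \<Longrightarrow> st_ty \<Gamma> l (For x e s) \<Gamma>"
| TNil: "seq_ty \<Gamma> l [] \<Gamma>"
| TCons: "st_ty \<Gamma> l s \<Gamma>1 \<Longrightarrow> seq_ty \<Gamma>1 l ss \<Gamma>' \<Longrightarrow> seq_ty \<Gamma> l (s # ss) \<Gamma>'"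

definition well_typed :: "prog \<Rightarrow> bool" where
  "well_typed p = (\<exists>\<Gamma>' t.
     seq_ty (Map.empty (params p [\<mapsto>] replicate (length (params p)) TInt)) False (body p) \<Gamma>'
     \<and> has_ty \<Gamma>' False (ret p) t \<and> t \<in> int_tys)"

definition bigO_run :: "(nat \<Rightarrow> nat) \<Rightarrow> prog \<Rightarrow> (int \<Rightarrow> nat \<Rightarrow> nat \<Rightarrow> nat) \<Rightarrow> bool" where
  "bigO_run T p g = (\<exists>C N. \<forall>vs v c m. run p vs v c m \<longrightarrow> sz_inputs vs \<ge> N \<longrightarrow>
      g v c m \<le> C * T (sz_inputs vs))"

end

(* Each instruction enlarges the largest value in the store by at most one bit: an operator adds
   at most one bit to its arguments, literals are bounded by constants of the program, and a loop
   counter grows by one per iteration, each of which costs an instruction. Hence the derivation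
   has size at most n + O(1) + ic, and the output, computed from the final store by one expression,
   has size at most that of the derivation plus a constant.
   Conversely, instrument p with a fresh variable z that starts at 1, is doubled before every
   executed statement and is returned. A statement costs at most a constant K apart from its
   sub-statements, so the instrumented program outputs 2^k with ic(p) <= (K + 1) k + O(1): the size
   of its output bounds the cost of p. Since T(n) >= n, the additive terms are absorbed into O(T(n)). *)

theory Submission
  imports Defs
begin

lemma sz_int_le_iff: "sz_int a \<le> k \<longleftrightarrow> \<bar>a\<bar> < 2 ^ k"
proof -
  have "sz_int a \<le> k \<longleftrightarrow> log 2 (real_of_int (\<bar>a\<bar> + 1)) \<le> real k"
    unfolding sz_int_def by (simp add: nat_le_iff ceiling_le_iff)
  also have "\<dots> \<longleftrightarrow> real_of_int (\<bar>a\<bar> + 1) \<le> 2 powr real k"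
    by (subst log_le_iff) auto
  also have "\<dots> \<longleftrightarrow> \<bar>a\<bar> + 1 \<le> 2 ^ k"
    by (metis of_int_le_iff of_int_numeral of_int_power powr_realpow zero_less_numeral)
  finally show ?thesis by linarith
qed

lemma sz_int_mono: "\<bar>a\<bar> \<le> \<bar>b\<bar> \<Longrightarrow> sz_int a \<le> sz_int b"
  by (meson le_less_trans order_refl sz_int_le_iff)

lemma sz_int_uminus [simp]: "sz_int (- a) = sz_int a"
  by (simp add: sz_int_def)

lemma sz_int_add_le: "sz_int a \<le> k \<Longrightarrow> sz_int b \<le> k \<Longrightarrow> sz_int (a + b) \<le> Suc k"
  by (simp add: sz_int_le_iff)

lemma sz_int_diff_le: "sz_int a \<le> k \<Longrightarrow> sz_int b \<le> k \<Longrightarrow> sz_int (a - b) \<le> Suc k"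
  using sz_int_add_le[of a k "- b"] by simp

lemma sz_int_of_nat_le: "sz_int (int n) \<le> n"
  by (simp add: sz_int_le_iff)

lemma less_sz_int_two_pow: "k < sz_int (2 ^ k)"
  using sz_int_le_iff[of "2 ^ k" k] by simp

lemma sz_int_cdiv_le: "sz_int (cdiv a b) \<le> sz_int a"
  using sdiv_int_range[of a b] by (auto simp: cdiv_def intro!: sz_int_mono)

lemma sz_int_cmod_le: "sz_int (cmod a b) \<le> sz_int b"
  using smod_int_range[of b a] by (auto simp: cmod_def intro!: sz_int_mono)

lemma sz_val_apply_op_le:
  assumes "apply_op f vs = Some v" and "\<forall>w\<in>set vs. sz_val w \<le> k"
  shows "sz_val v \<le> k + 1"
  using assms
  by (cases f) (auto simp: int1_def int2_def bool2_def sz_int_add_le sz_int_diff_le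
      sz_int_cdiv_le[THEN order.trans] sz_int_cmod_le[THEN order.trans]
      sz_int_of_nat_le[THEN order.trans] split: list.splits val.splits if_splits)

lemma those_eq_Some_iff: "those xs = Some ys \<longleftrightarrow> xs = map Some ys"
  by (induction xs arbitrary: ys) (auto split: option.splits)

lemma sz_val_le_sz_store: "finite (dom \<Sigma>) \<Longrightarrow> \<Sigma> x = Some v \<Longrightarrow> sz_val v \<le> sz_store \<Sigma>"
  unfolding sz_store_def by (rule Max_ge) (auto simp: finite_ran ranI)

lemma sz_store_le_iff: "finite (dom \<Sigma>) \<Longrightarrow> sz_store \<Sigma> \<le> k \<longleftrightarrow> (\<forall>v\<in>ran \<Sigma>. sz_val v \<le> k)"
  unfolding sz_store_def by (subst Max_le_iff) (auto simp: finite_ran)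

lemma sz_store_upd_le:
  "finite (dom \<Sigma>) \<Longrightarrow> sz_store \<Sigma> \<le> k \<Longrightarrow> sz_val v \<le> k \<Longrightarrow> sz_store (\<Sigma>(x \<mapsto> v)) \<le> k"
  by (auto simp: sz_store_le_iff ran_def)

fun exp_lits :: "exp \<Rightarrow> nat" where
  "exp_lits (Num n) = n"
| "exp_lits (Op f es) = sum_list (map exp_lits es)"
| "exp_lits (Paren e) = exp_lits e"
| "exp_lits _ = 0"

fun stmt_lits :: "stmt \<Rightarrow> nat" where
  "stmt_lits (Decl t x) = 0"
| "stmt_lits (Assign x e) = exp_lits e"
| "stmt_lits (Block ss) = sum_list (map stmt_lits ss)"
| "stmt_lits (If e s1 s2) = exp_lits e + stmt_lits s1 + stmt_lits s2"
| "stmt_lits (For x e s) = exp_lits e + stmt_lits s"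

lemma sz_val_eval_le:
  "finite (dom \<Sigma>) \<Longrightarrow> eval \<Sigma> e = Some v \<Longrightarrow> sz_store \<Sigma> \<le> k \<Longrightarrow> exp_lits e \<le> k \<Longrightarrow>
    sz_val v \<le> k + ecost e"
proof (induction e arbitrary: v)
  case (Var x)
  then show ?case using sz_val_le_sz_store by fastforce
next
  case (Num n)
  then show ?case using sz_int_of_nat_le[of n] by auto
next
  case (Op f es)
  obtain vs where "those (map (eval \<Sigma>) es) = Some vs" and app: "apply_op f vs = Some v"
    using Op.prems(2) by (auto split: Option.bind_splits)
  then have args: "map (eval \<Sigma>) es = map Some vs" by (simp only: those_eq_Some_iff)
  have "sz_val w \<le> k + sum_list (map ecost es)" if "w \<in> set vs" for w
  proof -
    have "Some w \<in> set (map (eval \<Sigma>) es)" unfolding args using that by simp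
    then obtain e where e: "e \<in> set es" "eval \<Sigma> e = Some w" by auto
    have "exp_lits e \<le> k"
      using Op.prems(4) e(1) member_le_sum_list[of "exp_lits e" "map exp_lits es"] by simp
    then have "sz_val w \<le> k + ecost e" using Op.IH e Op.prems(1,3) by blast
    also have "ecost e \<le> sum_list (map ecost es)" using e(1) by (simp add: member_le_sum_list)
    finally show ?thesis by simp
  qed
  then show ?case using sz_val_apply_op_le[OF app] by simp
qed auto

lemma exec_finite_dom:
  "exec \<Sigma> s \<Sigma>' c m \<Longrightarrow> finite (dom \<Sigma>) \<Longrightarrow> finite (dom \<Sigma>')"
  "execs \<Sigma> ss \<Sigma>' c m \<Longrightarrow> finite (dom \<Sigma>) \<Longrightarrow> finite (dom \<Sigma>')"
  "exec_loop x s j i \<Sigma> \<Sigma>' c m \<Longrightarrow> finite (dom \<Sigma>) \<Longrightarrow> finite (dom \<Sigma>')"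
  by (induction rule: exec_execs_exec_loop.inducts) auto

(* Rule induction over exec presents store updates \<Sigma>(x \<mapsto> v) eta-expanded, and fun_upd_apply
   would unfold them into conditionals that no longer match the update lemmas; so it is
   disabled in these inductions. *)

lemma exec_final_sz_store_le:
  "exec \<Sigma> s \<Sigma>' c m \<Longrightarrow> sz_store \<Sigma>' \<le> m"
  "execs \<Sigma> ss \<Sigma>' c m \<Longrightarrow> sz_store \<Sigma>' \<le> m"
  "exec_loop x s j i \<Sigma> \<Sigma>' c m \<Longrightarrow> sz_store \<Sigma>' \<le> m"
  by (induction rule: exec_execs_exec_loop.inducts) (auto simp del: fun_upd_apply)

lemma ecost_pos: "0 < ecost e"
  by (cases e) auto

lemma exec_cost_pos: "exec \<Sigma> s \<Sigma>' c m \<Longrightarrow> 0 < c"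
  by (cases rule: exec.cases) (auto simp: ecost_pos)

lemma exec_size_le:
  "exec \<Sigma> s \<Sigma>' c m \<Longrightarrow> finite (dom \<Sigma>) \<Longrightarrow> sz_store \<Sigma> \<le> k \<Longrightarrow> stmt_lits s \<le> k \<Longrightarrow>
    m \<le> k + c"
  "execs \<Sigma> ss \<Sigma>' c m \<Longrightarrow> finite (dom \<Sigma>) \<Longrightarrow> sz_store \<Sigma> \<le> k \<Longrightarrow>
    sum_list (map stmt_lits ss) \<le> k \<Longrightarrow> m \<le> k + c"
  "exec_loop x s j i \<Sigma> \<Sigma>' c m \<Longrightarrow> finite (dom \<Sigma>) \<Longrightarrow> sz_store \<Sigma> \<le> k \<Longrightarrow>
    stmt_lits s \<le> k \<Longrightarrow> 0 \<le> j \<Longrightarrow> nat j \<le> k \<Longrightarrow> m \<le> k + c"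
  supply fun_upd_apply [simp del]
proof (induction arbitrary: k and k and k rule: exec_execs_exec_loop.inducts)
  case (ExDecl \<Sigma>' \<Sigma> x t)
  have "sz_store (\<Sigma>(x \<mapsto> default_val t)) \<le> k + 1"
    using ExDecl.prems by (intro sz_store_upd_le) (auto simp: default_val_def sz_int_def)
  then show ?case using ExDecl by simp
next
  case (ExAssign x \<Sigma> e v \<Sigma>')
  have "sz_store (\<Sigma>(x \<mapsto> v)) \<le> k + (1 + ecost e)"
    using ExAssign sz_val_eval_le[of \<Sigma> e v k] by (intro sz_store_upd_le) auto
  then show ?case using ExAssign by simp
next
  case (ExCons \<Sigma> s \<Sigma>1 c1 m1 ss \<Sigma>' c2 m2)
  have m1: "m1 \<le> k + c1" using ExCons.IH(1)[of k] ExCons.prems by simp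
  have "finite (dom \<Sigma>1)" using exec_finite_dom(1)[OF ExCons.hyps(1)] ExCons.prems(1) .
  moreover have "sz_store \<Sigma>1 \<le> k + c1" using exec_final_sz_store_le(1)[OF ExCons.hyps(1)] m1 by simp
  ultimately have "m2 \<le> (k + c1) + c2" using ExCons.IH(2)[of "k + c1"] ExCons.prems(3) by simp
  then show ?case using m1 by simp
next
  case (LoopStep j i \<Sigma> x s \<Sigma>1 c1 m1 \<Sigma>' c2 m2)
  have "sz_int j \<le> k"
    using LoopStep.prems sz_int_of_nat_le[of "nat j"] by simp
  then have "sz_store (\<Sigma>(x \<mapsto> IntV j)) \<le> k"
    using LoopStep.prems by (intro sz_store_upd_le) auto
  then have m1: "m1 \<le> k + c1" using LoopStep.IH(1)[of k] LoopStep.prems by simp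
  have "finite (dom \<Sigma>1)" using exec_finite_dom(1)[OF LoopStep.hyps(2)] LoopStep.prems(1) by simp
  moreover have "sz_store \<Sigma>1 \<le> k + c1"
    using exec_final_sz_store_le(1)[OF LoopStep.hyps(2)] m1 by simp
  \<comment> \<open>the loop variable grows by one per iteration, and each iteration costs an instruction\<close>
  moreover have "nat (j + 1) \<le> k + c1"
    using LoopStep.prems exec_cost_pos[OF LoopStep.hyps(2)] by simp
  ultimately have "m2 \<le> (k + c1) + c2" using LoopStep.IH(2)[of "k + c1"] LoopStep.prems by simp
  then show ?case using m1 LoopStep.prems by simp
qed (fastforce intro: le_SucI trans_le_add2)+

lemma sz_store_init_le: "sz_store (Map.empty(xs [\<mapsto>] map IntV vs)) \<le> sz_inputs vs"
proof (subst sz_store_le_iff, simp, intro ballI)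
  fix w assume "w \<in> ran (Map.empty(xs [\<mapsto>] map IntV vs))"
  then obtain a where "a \<in> set vs" "w = IntV a"
    by (auto simp: map_upds_def ran_def dest!: map_of_SomeD set_zip_rightD)
  then show "sz_val w \<le> sz_inputs vs"
    unfolding sz_inputs_def using member_le_sum_list[of "sz_int a" "map sz_int vs"] by simp
qed

definition prog_lits :: "prog \<Rightarrow> nat" where
  "prog_lits p = sum_list (map stmt_lits (body p)) + exp_lits (ret p)"

lemma run_size_le:
  assumes "run p vs v c m"
  shows "m \<le> sz_inputs vs + prog_lits p + c"
  using assms
proof cases
  case (1 \<Sigma>0 \<Sigma>' c' m')
  have "sz_store \<Sigma>0 \<le> sz_inputs vs" using 1 sz_store_init_le by simp
  then have "m' \<le> sz_inputs vs + prog_lits p + c'"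
    using exec_size_le(2)[OF \<open>execs \<Sigma>0 (body p) \<Sigma>' c' m'\<close>, of "sz_inputs vs + prog_lits p"] 1
    by (simp add: prog_lits_def)
  then show ?thesis using 1 \<open>sz_store \<Sigma>0 \<le> sz_inputs vs\<close> by simp
qed

lemma run_output_size_le:
  assumes "run p vs v c m"
  shows "sz_int v \<le> m + prog_lits p + ecost (ret p)"
  using assms
proof cases
  case (1 \<Sigma>0 \<Sigma>' c' m')
  have "finite (dom \<Sigma>')" using 1 exec_finite_dom(2) by simp
  moreover have "sz_store \<Sigma>' \<le> m + prog_lits p" using 1 exec_final_sz_store_le(2) by fastforce
  ultimately have "sz_val (IntV v) \<le> m + prog_lits p + ecost (ret p)"
    using 1 by (intro sz_val_eval_le) (auto simp: prog_lits_def)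
  then show ?thesis by simp
qed

fun exp_vars :: "exp \<Rightarrow> string set" where
  "exp_vars (Var x) = {x}"
| "exp_vars (Op f es) = \<Union> (exp_vars ` set es)"
| "exp_vars (Paren e) = exp_vars e"
| "exp_vars _ = {}"

fun stmt_vars :: "stmt \<Rightarrow> string set" where
  "stmt_vars (Decl t x) = {x}"
| "stmt_vars (Assign x e) = insert x (exp_vars e)"
| "stmt_vars (Block ss) = \<Union> (stmt_vars ` set ss)"
| "stmt_vars (If e s1 s2) = exp_vars e \<union> stmt_vars s1 \<union> stmt_vars s2"
| "stmt_vars (For x e s) = insert x (exp_vars e \<union> stmt_vars s)"

lemma finite_exp_vars: "finite (exp_vars e)"
  by (induction e) auto

lemma finite_stmt_vars: "finite (stmt_vars s)"
  by (induction s) (auto simp: finite_exp_vars)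

lemma eval_fun_upd_fresh: "z \<notin> exp_vars e \<Longrightarrow> eval (\<Sigma>(z := w)) e = eval \<Sigma> e"
proof (induction e)
  case (Op f es)
  then have "map (eval (\<Sigma>(z := w))) es = map (eval \<Sigma>) es"
    by (auto simp del: fun_upd_apply)
  then show ?case by (simp only: eval.simps)
qed auto

lemma has_ty_fun_upd_fresh: "has_ty \<Gamma> l e t \<Longrightarrow> z \<notin> exp_vars e \<Longrightarrow> has_ty (\<Gamma>(z \<mapsto> t')) l e t"
  by (induction rule: has_ty.induct) (auto intro: has_ty.intros)

definition double_var :: "string \<Rightarrow> stmt" where
  "double_var z = Assign z (Op OPlus [Var z, Var z])"

fun instrument :: "string \<Rightarrow> stmt \<Rightarrow> stmt list" where
  "instrument z (Block ss) = [double_var z, Block (concat (map (instrument z) ss))]"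
| "instrument z (If e s1 s2) =
    [double_var z, If e (Block (instrument z s1)) (Block (instrument z s2))]"
| "instrument z (For x e s) = [double_var z, For x e (Block (instrument z s))]"
| "instrument z s = [double_var z, s]"

inductive_cases seq_ty_NilE: "seq_ty \<Gamma> l [] \<Gamma>'"
inductive_cases seq_ty_ConsE: "seq_ty \<Gamma> l (s # ss) \<Gamma>'"

lemma seq_ty_append: "seq_ty \<Gamma> l xs \<Gamma>1 \<Longrightarrow> seq_ty \<Gamma>1 l ys \<Gamma>' \<Longrightarrow> seq_ty \<Gamma> l (xs @ ys) \<Gamma>'"
  by (induction xs arbitrary: \<Gamma>) (auto elim!: seq_ty_NilE seq_ty_ConsE intro: TCons)

lemma seq_ty_double_var_Cons:
  assumes "\<Gamma> z = Some TInt" and "st_ty \<Gamma> l s \<Gamma>'"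
  shows "seq_ty \<Gamma> l [double_var z, s] \<Gamma>'"
proof -
  have "has_ty \<Gamma> l (Op OPlus [Var z, Var z]) (tsup TInt TInt)"
    using assms(1) by (intro TyArith TyVar) (auto simp: int_tys_def)
  then have "st_ty \<Gamma> l (double_var z) \<Gamma>"
    unfolding double_var_def using assms(1) by (intro TAssign) (auto simp: compat_def int_tys_def)
  then show ?thesis using assms(2) by (blast intro: TCons TNil)
qed

lemma seq_ty_instrument:
  "st_ty \<Gamma> l s \<Gamma>' \<Longrightarrow> z \<notin> stmt_vars s \<Longrightarrow>
    seq_ty (\<Gamma>(z \<mapsto> TInt)) l (instrument z s) (\<Gamma>'(z \<mapsto> TInt))"
  "seq_ty \<Gamma> l ss \<Gamma>' \<Longrightarrow> (\<forall>s\<in>set ss. z \<notin> stmt_vars s) \<Longrightarrow>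
    seq_ty (\<Gamma>(z \<mapsto> TInt)) l (concat (map (instrument z) ss)) (\<Gamma>'(z \<mapsto> TInt))"
proof (induction rule: st_ty_seq_ty.inducts)
  case (TDecl \<Gamma> x l t)
  then have "st_ty (\<Gamma>(z \<mapsto> TInt)) l (Decl t x) (\<Gamma>(x \<mapsto> t, z \<mapsto> TInt))"
    using st_ty_seq_ty.TDecl[of "\<Gamma>(z \<mapsto> TInt)" x l t] by (simp add: fun_upd_twist)
  then show ?case unfolding instrument.simps by (rule seq_ty_double_var_Cons[rotated]) simp
next
  case (TAssign \<Gamma> x tx l e t)
  then have "has_ty (\<Gamma>(z \<mapsto> TInt)) l e t" by (simp add: has_ty_fun_upd_fresh)
  then have "st_ty (\<Gamma>(z \<mapsto> TInt)) l (Assign x e) (\<Gamma>(z \<mapsto> TInt))"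
    using TAssign by (intro st_ty_seq_ty.TAssign[of _ _ tx]) auto
  then show ?case unfolding instrument.simps by (rule seq_ty_double_var_Cons[rotated]) simp
next
  case (TBlock \<Gamma> l ss \<Gamma>')
  have "st_ty (\<Gamma>(z \<mapsto> TInt)) l (Block (concat (map (instrument z) ss))) (\<Gamma>(z \<mapsto> TInt))"
    by (rule st_ty_seq_ty.TBlock, rule TBlock.IH) (use TBlock.prems in simp)
  then show ?case unfolding instrument.simps by (rule seq_ty_double_var_Cons[rotated]) simp
next
  case (TIf \<Gamma> l e s1 \<Gamma>1 s2 \<Gamma>2)
  have "st_ty (\<Gamma>(z \<mapsto> TInt)) l (Block (instrument z s1)) (\<Gamma>(z \<mapsto> TInt))"
    by (rule st_ty_seq_ty.TBlock, rule TIf.IH(1)) (use TIf.prems in simp)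
  moreover have "st_ty (\<Gamma>(z \<mapsto> TInt)) l (Block (instrument z s2)) (\<Gamma>(z \<mapsto> TInt))"
    by (rule st_ty_seq_ty.TBlock, rule TIf.IH(2)) (use TIf.prems in simp)
  moreover have "has_ty (\<Gamma>(z \<mapsto> TInt)) l e TBool"
    using TIf by (simp add: has_ty_fun_upd_fresh)
  ultimately have "st_ty (\<Gamma>(z \<mapsto> TInt)) l
      (If e (Block (instrument z s1)) (Block (instrument z s2))) (\<Gamma>(z \<mapsto> TInt))"
    by (intro st_ty_seq_ty.TIf)
  then show ?case unfolding instrument.simps by (rule seq_ty_double_var_Cons[rotated]) simp
next
  case (TFor \<Gamma> l e x s \<Gamma>')
  have "seq_ty (\<Gamma>(x \<mapsto> TIInt, z \<mapsto> TInt)) True (instrument z s) (\<Gamma>'(z \<mapsto> TInt))"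
    by (rule TFor.IH) (use TFor.prems in simp)
  then have "st_ty (\<Gamma>(z \<mapsto> TInt, x \<mapsto> TIInt)) True (Block (instrument z s)) (\<Gamma>(z \<mapsto> TInt, x \<mapsto> TIInt))"
    using TFor.prems by (intro st_ty_seq_ty.TBlock) (simp add: fun_upd_twist)
  moreover have "has_ty (\<Gamma>(z \<mapsto> TInt)) l (bound_exp e) TIInt"
    using TFor by (simp add: has_ty_fun_upd_fresh bound_exp_def)
  ultimately have "st_ty (\<Gamma>(z \<mapsto> TInt)) l (For x e (Block (instrument z s))) (\<Gamma>(z \<mapsto> TInt))"
    using TFor by (intro st_ty_seq_ty.TFor) auto
  then show ?case unfolding instrument.simps by (rule seq_ty_double_var_Cons[rotated]) simp
qed (auto intro: st_ty_seq_ty.intros seq_ty_append)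

fun stmt_exp_cost :: "stmt \<Rightarrow> nat" where
  "stmt_exp_cost (Decl t x) = 0"
| "stmt_exp_cost (Assign x e) = ecost e"
| "stmt_exp_cost (Block ss) = sum_list (map stmt_exp_cost ss)"
| "stmt_exp_cost (If e s1 s2) = ecost e + stmt_exp_cost s1 + stmt_exp_cost s2"
| "stmt_exp_cost (For x e s) = ecost (bound_exp e) + stmt_exp_cost s"

inductive_cases execs_NilE: "execs \<Sigma> [] \<Sigma>' c m"
inductive_cases execs_ConsE: "execs \<Sigma> (s # ss) \<Sigma>' c m"

lemma execs_append:
  "execs \<Sigma> xs \<Sigma>1 c1 m1 \<Longrightarrow> execs \<Sigma>1 ys \<Sigma>2 c2 m2 \<Longrightarrow> \<exists>c m. execs \<Sigma> (xs @ ys) \<Sigma>2 c m"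
  by (induction xs arbitrary: \<Sigma> c1 m1) (fastforce elim: execs_NilE execs_ConsE intro: ExCons)+

lemma execs_double_var_Cons:
  assumes "exec (\<Sigma>(z \<mapsto> IntV (2 * a))) s \<Sigma>' c m"
  shows "\<exists>c' m'. execs (\<Sigma>(z \<mapsto> IntV a)) [double_var z, s] \<Sigma>' c' m'"
proof -
  have "eval (\<Sigma>(z \<mapsto> IntV a)) (Op OPlus [Var z, Var z]) = Some (IntV (2 * a))"
    by (simp add: int2_def)
  then have "exec (\<Sigma>(z \<mapsto> IntV a)) (double_var z) (\<Sigma>(z \<mapsto> IntV (2 * a)))
      (1 + ecost (Op OPlus [Var z, Var z]))
      (max (sz_store (\<Sigma>(z \<mapsto> IntV a))) (sz_store (\<Sigma>(z \<mapsto> IntV (2 * a)))))"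
    unfolding double_var_def by (intro ExAssign) auto
  then show ?thesis using assms by (blast intro: ExCons ExNil)
qed

(* Every executed statement of s costs at most K + 1 apart from its sub-statements and triggers
   exactly one doubling of z. *)
lemma exec_instrument:
  "exec \<Sigma> s \<Sigma>' c m \<Longrightarrow> z \<notin> stmt_vars s \<Longrightarrow> stmt_exp_cost s \<le> K \<Longrightarrow> \<exists>k. c \<le> (K + 1) * k \<and>
    (\<exists>c' m'. execs (\<Sigma>(z \<mapsto> IntV a)) (instrument z s) (\<Sigma>'(z \<mapsto> IntV (2 ^ k * a))) c' m')"
  "execs \<Sigma> ss \<Sigma>' c m \<Longrightarrow> \<forall>s\<in>set ss. z \<notin> stmt_vars s \<Longrightarrow> sum_list (map stmt_exp_cost ss) \<le> K \<Longrightarrow>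
    \<exists>k. c \<le> (K + 1) * k \<and> (\<exists>c' m'.
      execs (\<Sigma>(z \<mapsto> IntV a)) (concat (map (instrument z) ss)) (\<Sigma>'(z \<mapsto> IntV (2 ^ k * a))) c' m')"
  "exec_loop x s j i \<Sigma> \<Sigma>' c m \<Longrightarrow> x \<noteq> z \<Longrightarrow> z \<notin> stmt_vars s \<Longrightarrow> stmt_exp_cost s \<le> K \<Longrightarrow>
    \<exists>k. c \<le> (K + 1) * k \<and> (\<exists>c' m'.
      exec_loop x (Block (instrument z s)) j i (\<Sigma>(z \<mapsto> IntV a)) (\<Sigma>'(z \<mapsto> IntV (2 ^ k * a))) c' m')"
  supply fun_upd_apply [simp del]
proof (induction arbitrary: a and a and a rule: exec_execs_exec_loop.inducts)
  case (ExDecl \<Sigma>' \<Sigma> x t)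
  have "exec (\<Sigma>(z \<mapsto> IntV (2 * a))) (Decl t x) (\<Sigma>'(z \<mapsto> IntV (2 * a))) 1
      (max (sz_store (\<Sigma>(z \<mapsto> IntV (2 * a)))) (sz_store (\<Sigma>'(z \<mapsto> IntV (2 * a)))))"
    using ExDecl by (intro exec_execs_exec_loop.ExDecl) (auto simp: fun_upd_twist)
  from execs_double_var_Cons[OF this] show ?case by (intro exI[of _ 1]) simp
next
  case (ExAssign x \<Sigma> e v \<Sigma>')
  have "exec (\<Sigma>(z \<mapsto> IntV (2 * a))) (Assign x e) (\<Sigma>'(z \<mapsto> IntV (2 * a))) (1 + ecost e)
      (max (sz_store (\<Sigma>(z \<mapsto> IntV (2 * a)))) (sz_store (\<Sigma>'(z \<mapsto> IntV (2 * a)))))"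
    using ExAssign
    by (intro exec_execs_exec_loop.ExAssign) (auto simp: fun_upd_twist eval_fun_upd_fresh)
  from execs_double_var_Cons[OF this] show ?case using ExAssign.prems by (intro exI[of _ 1]) simp
next
  case (ExBlock \<Sigma> ss \<Sigma>' c m)
  obtain k c' m' where "c \<le> (K + 1) * k" and
    "execs (\<Sigma>(z \<mapsto> IntV (2 * a))) (concat (map (instrument z) ss))
      (\<Sigma>'(z \<mapsto> IntV (2 ^ Suc k * a))) c' m'"
    using ExBlock.IH[of "2 * a"] ExBlock.prems by (auto simp: mult_ac)
  then show ?case
    by (intro exI[of _ "Suc k"]) (auto intro: execs_double_var_Cons exec_execs_exec_loop.ExBlock)
next
  case (ExIfT \<Sigma> e s1 \<Sigma>' c m s2)
  obtain k c' m' where "c \<le> (K + 1) * k" and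
    "execs (\<Sigma>(z \<mapsto> IntV (2 * a))) (instrument z s1) (\<Sigma>'(z \<mapsto> IntV (2 ^ Suc k * a))) c' m'"
    using ExIfT.IH[of "2 * a"] ExIfT.prems by (auto simp: mult_ac)
  moreover have "eval (\<Sigma>(z \<mapsto> IntV (2 * a))) e = Some (BoolV True)"
    using ExIfT by (simp add: eval_fun_upd_fresh)
  ultimately have "\<exists>c' m'. execs (\<Sigma>(z \<mapsto> IntV a)) (instrument z (If e s1 s2))
      (\<Sigma>'(z \<mapsto> IntV (2 ^ Suc k * a))) c' m'"
    unfolding instrument.simps
    by (blast intro: execs_double_var_Cons exec_execs_exec_loop.ExIfT exec_execs_exec_loop.ExBlock)
  then show ?case using \<open>c \<le> (K + 1) * k\<close> ExIfT.prems by (intro exI[of _ "Suc k"]) simp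
next
  case (ExIfF \<Sigma> e s2 \<Sigma>' c m s1)
  obtain k c' m' where "c \<le> (K + 1) * k" and
    "execs (\<Sigma>(z \<mapsto> IntV (2 * a))) (instrument z s2) (\<Sigma>'(z \<mapsto> IntV (2 ^ Suc k * a))) c' m'"
    using ExIfF.IH[of "2 * a"] ExIfF.prems by (auto simp: mult_ac)
  moreover have "eval (\<Sigma>(z \<mapsto> IntV (2 * a))) e = Some (BoolV False)"
    using ExIfF by (simp add: eval_fun_upd_fresh)
  ultimately have "\<exists>c' m'. execs (\<Sigma>(z \<mapsto> IntV a)) (instrument z (If e s1 s2))
      (\<Sigma>'(z \<mapsto> IntV (2 ^ Suc k * a))) c' m'"
    unfolding instrument.simps
    by (blast intro: execs_double_var_Cons exec_execs_exec_loop.ExIfF exec_execs_exec_loop.ExBlock)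
  then show ?case using \<open>c \<le> (K + 1) * k\<close> ExIfF.prems by (intro exI[of _ "Suc k"]) simp
next
  case (ExFor \<Sigma> e i x s \<Sigma>' c m)
  obtain k c' m' where "c \<le> (K + 1) * k" and
    "exec_loop x (Block (instrument z s)) 0 i (\<Sigma>(z \<mapsto> IntV (2 * a)))
      (\<Sigma>'(z \<mapsto> IntV (2 ^ Suc k * a))) c' m'"
    using ExFor.IH[of "2 * a"] ExFor.prems by (auto simp: mult_ac)
  moreover have "eval (\<Sigma>(z \<mapsto> IntV (2 * a))) (bound_exp e) = Some (IntV i)"
    using ExFor by (simp add: eval_fun_upd_fresh bound_exp_def)
  ultimately have "\<exists>c' m'. execs (\<Sigma>(z \<mapsto> IntV a)) (instrument z (For x e s))
      (\<Sigma>'(z \<mapsto> IntV (2 ^ Suc k * a))) c' m'"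
    unfolding instrument.simps by (blast intro: execs_double_var_Cons exec_execs_exec_loop.ExFor)
  then show ?case using \<open>c \<le> (K + 1) * k\<close> ExFor.prems by (intro exI[of _ "Suc k"]) simp
next
  case (ExNil \<Sigma>)
  show ?case by (rule exI[of _ 0]) (auto intro: exec_execs_exec_loop.ExNil)
next
  case (ExCons \<Sigma> s \<Sigma>1 c1 m1 ss \<Sigma>' c2 m2)
  obtain k1 c1' m1' where "c1 \<le> (K + 1) * k1"
    and "execs (\<Sigma>(z \<mapsto> IntV a)) (instrument z s) (\<Sigma>1(z \<mapsto> IntV (2 ^ k1 * a))) c1' m1'"
    using ExCons.IH(1)[of a] ExCons.prems by auto
  moreover obtain k2 c2' m2' where "c2 \<le> (K + 1) * k2"
    and "execs (\<Sigma>1(z \<mapsto> IntV (2 ^ k1 * a))) (concat (map (instrument z) ss))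
      (\<Sigma>'(z \<mapsto> IntV (2 ^ (k1 + k2) * a))) c2' m2'"
    using ExCons.IH(2)[of "2 ^ k1 * a"] ExCons.prems by (auto simp: power_add mult_ac)
  ultimately show ?case
    by (intro exI[of _ "k1 + k2"]) (auto simp: distrib_left dest: execs_append)
next
  case (LoopDone j i x s \<Sigma>)
  show ?case by (rule exI[of _ 0]) (use LoopDone(1) in \<open>auto intro: exec_execs_exec_loop.LoopDone\<close>)
next
  case (LoopStep j i \<Sigma> x s \<Sigma>1 c1 m1 \<Sigma>' c2 m2)
  obtain k1 c1' m1' where "c1 \<le> (K + 1) * k1"
    and "execs (\<Sigma>(z \<mapsto> IntV a, x \<mapsto> IntV j)) (instrument z s) (\<Sigma>1(z \<mapsto> IntV (2 ^ k1 * a))) c1' m1'"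
    using LoopStep.IH(1)[of a] LoopStep.prems by (auto simp: fun_upd_twist)
  moreover obtain k2 c2' m2' where "c2 \<le> (K + 1) * k2"
    and "exec_loop x (Block (instrument z s)) (j + 1) i (\<Sigma>1(z \<mapsto> IntV (2 ^ k1 * a)))
      (\<Sigma>'(z \<mapsto> IntV (2 ^ (k1 + k2) * a))) c2' m2'"
    using LoopStep.IH(2)[of "2 ^ k1 * a"] LoopStep.prems by (auto simp: power_add mult_ac)
  ultimately show ?case using LoopStep.hyps(1)
    by (intro exI[of _ "k1 + k2"])
      (auto simp: distrib_left intro: exec_execs_exec_loop.LoopStep exec_execs_exec_loop.ExBlock)
qed

(* The counter is declared int rather than iint so that it may be assigned inside loops. *)
definition counting_prog :: "string \<Rightarrow> prog \<Rightarrow> prog" where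
  "counting_prog z p = \<lparr>params = params p,
     body = Decl TInt z # Assign z (Num 1) # concat (map (instrument z) (body p)),
     ret = Var z\<rparr>"

lemma well_typed_counting_prog:
  assumes "well_typed p" and "z \<notin> set (params p)" and "\<forall>s\<in>set (body p). z \<notin> stmt_vars s"
  shows "well_typed (counting_prog z p)"
proof -
  define \<Gamma>0 where "\<Gamma>0 = Map.empty (params p [\<mapsto>] replicate (length (params p)) TInt)"
  obtain \<Gamma>' where "seq_ty \<Gamma>0 False (body p) \<Gamma>'"
    using assms(1) unfolding well_typed_def \<Gamma>0_def by blast
  then have "seq_ty (\<Gamma>0(z \<mapsto> TInt)) False (concat (map (instrument z) (body p))) (\<Gamma>'(z \<mapsto> TInt))"
    using assms(3) by (rule seq_ty_instrument(2))
  moreover have "\<Gamma>0 z = None" unfolding \<Gamma>0_def using assms(2) by simp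
  ultimately have "seq_ty \<Gamma>0 False (body (counting_prog z p)) (\<Gamma>'(z \<mapsto> TInt))"
    unfolding counting_prog_def
    by (auto intro!: TCons TDecl TAssign TyNum simp: compat_def int_tys_def)
  moreover have "has_ty (\<Gamma>'(z \<mapsto> TInt)) False (ret (counting_prog z p)) TInt"
    by (simp add: counting_prog_def TyVar)
  ultimately show ?thesis
    unfolding well_typed_def \<Gamma>0_def by (auto simp: counting_prog_def int_tys_def)
qed

definition prog_exp_cost :: "prog \<Rightarrow> nat" where
  "prog_exp_cost p = sum_list (map stmt_exp_cost (body p))"

lemma run_counting_prog:
  assumes "run p vs v c m" and "z \<notin> set (params p)" and "\<forall>s\<in>set (body p). z \<notin> stmt_vars s"
  shows "\<exists>v' c' m'. run (counting_prog z p) vs v' c' m' \<and>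
    c \<le> (prog_exp_cost p + 1) * sz_int v' + ecost (ret p)"
  using assms(1)
proof cases
  case (1 \<Sigma>0 \<Sigma>' c0 m0)
  obtain k c' m' where k: "c0 \<le> (prog_exp_cost p + 1) * k"
    and "execs (\<Sigma>0(z \<mapsto> IntV 1)) (concat (map (instrument z) (body p))) (\<Sigma>'(z \<mapsto> IntV (2 ^ k))) c' m'"
    using exec_instrument(2)[OF \<open>execs \<Sigma>0 (body p) \<Sigma>' c0 m0\<close> assms(3), of "prog_exp_cost p" 1]
    by (auto simp: prog_exp_cost_def)
  moreover have "exec \<Sigma>0 (Decl TInt z) (\<Sigma>0(z \<mapsto> IntV 0)) 1
      (max (sz_store \<Sigma>0) (sz_store (\<Sigma>0(z \<mapsto> IntV 0))))"
    by (rule ExDecl) (simp add: default_val_def)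
  moreover have "exec (\<Sigma>0(z \<mapsto> IntV 0)) (Assign z (Num 1)) (\<Sigma>0(z \<mapsto> IntV 1)) (1 + ecost (Num 1))
      (max (sz_store (\<Sigma>0(z \<mapsto> IntV 0))) (sz_store (\<Sigma>0(z \<mapsto> IntV 1))))"
    by (rule ExAssign) simp_all
  ultimately have "\<exists>c' m'. execs \<Sigma>0 (body (counting_prog z p)) (\<Sigma>'(z \<mapsto> IntV (2 ^ k))) c' m'"
    unfolding counting_prog_def by (auto intro!: ExCons)
  then obtain c' m' where "execs \<Sigma>0 (body (counting_prog z p)) (\<Sigma>'(z \<mapsto> IntV (2 ^ k))) c' m'"
    by blast
  then have "run (counting_prog z p) vs (2 ^ k) (c' + ecost (ret (counting_prog z p)))
      (max (sz_store \<Sigma>0) m')"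
    by (rule run.intros[rotated 2]) (use 1 in \<open>simp_all add: counting_prog_def\<close>)
  moreover have "c0 \<le> (prog_exp_cost p + 1) * sz_int (2 ^ k)"
    using k less_sz_int_two_pow[of k] by (meson le_trans less_imp_le_nat mult_le_mono2)
  ultimately show ?thesis using 1 by fastforce
qed

lemma bigO_runI:
  assumes "\<forall>n. n \<le> T n"
    and "\<And>vs v c m. run p vs v c m \<Longrightarrow> N \<le> sz_inputs vs \<Longrightarrow>
      g v c m \<le> C * T (sz_inputs vs) + D * sz_inputs vs + D"
  shows "bigO_run T p g"
  unfolding bigO_run_def
proof (rule exI[of _ "C + 2 * D"], rule exI[of _ "max N 1"], intro allI impI)
  fix vs v c m
  assume "run p vs v c m" and large: "max N 1 \<le> sz_inputs vs"
  let ?n = "sz_inputs vs"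
  have "D * ?n \<le> D * T ?n" using assms(1) by simp
  moreover have "D \<le> D * T ?n"
    using assms(1) large by (metis le_trans max.bounded_iff mult_le_mono2 nat_mult_1_right)
  moreover have "g v c m \<le> C * T ?n + D * ?n + D"
    using assms(2) \<open>run p vs v c m\<close> large by simp
  ultimately have "g v c m \<le> C * T ?n + D * T ?n + D * T ?n" by linarith
  then show "g v c m \<le> (C + 2 * D) * T ?n" by (simp add: algebra_simps)
qed

lemma bigO_size_if_bigO_cost:
  assumes "\<forall>n. n \<le> T n" and "bigO_run T p (\<lambda>v c m. c)"
  shows "bigO_run T p (\<lambda>v c m. m)"
proof -
  obtain C N where "\<forall>vs v c m. run p vs v c m \<longrightarrow> N \<le> sz_inputs vs \<longrightarrow> c \<le> C * T (sz_inputs vs)"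
    using assms(2) unfolding bigO_run_def by blast
  then show ?thesis
    using run_size_le
    by (intro bigO_runI[OF assms(1), where N = N and C = C and D = "prog_lits p + 1"]) fastforce
qed

lemma bigO_output_if_bigO_size:
  assumes "\<forall>n. n \<le> T n" and "bigO_run T p (\<lambda>v c m. m)"
  shows "bigO_run T p (\<lambda>v c m. sz_int v)"
proof -
  obtain C N where "\<forall>vs v c m. run p vs v c m \<longrightarrow> N \<le> sz_inputs vs \<longrightarrow> m \<le> C * T (sz_inputs vs)"
    using assms(2) unfolding bigO_run_def by blast
  then show ?thesis
    using run_output_size_le
    by (intro bigO_runI[OF assms(1), where N = N and C = C and D = "prog_lits p + ecost (ret p)"])
      fastforce
qed

lemma bigO_cost_if_bigO_outputs:
  assumes "\<forall>n. n \<le> T n" and "well_typed p"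
    and "\<forall>p. well_typed p \<longrightarrow> bigO_run T p (\<lambda>v c m. sz_int v)"
  shows "bigO_run T p (\<lambda>v c m. c)"
proof -
  have "finite (set (params p) \<union> \<Union> (stmt_vars ` set (body p)))"
    by (simp add: finite_stmt_vars)
  then obtain z where z: "z \<notin> set (params p)" "\<forall>s\<in>set (body p). z \<notin> stmt_vars s"
    using ex_new_if_finite[OF infinite_UNIV_listI] by blast
  then have "well_typed (counting_prog z p)"
    using assms(2) by (rule well_typed_counting_prog[rotated])
  then obtain C N where bound: "\<forall>vs v c m. run (counting_prog z p) vs v c m \<longrightarrow> N \<le> sz_inputs vs \<longrightarrow>
      sz_int v \<le> C * T (sz_inputs vs)"
    using assms(3) unfolding bigO_run_def by blast
  let ?K = "prog_exp_cost p + 1"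
  show ?thesis
  proof (rule bigO_runI[OF assms(1), where N = N and C = "?K * C" and D = "ecost (ret p)"])
    fix vs v c m
    assume "run p vs v c m" and "N \<le> sz_inputs vs"
    then obtain v' c' m' where "run (counting_prog z p) vs v' c' m'"
      and "c \<le> ?K * sz_int v' + ecost (ret p)"
      using run_counting_prog z by blast
    moreover have "sz_int v' \<le> C * T (sz_inputs vs)"
      using bound \<open>run (counting_prog z p) vs v' c' m'\<close> \<open>N \<le> sz_inputs vs\<close> by blast
    then have "?K * sz_int v' \<le> ?K * C * T (sz_inputs vs)"
      unfolding mult.assoc by (rule mult_le_mono2)
    ultimately show "c \<le> ?K * C * T (sz_inputs vs) + ecost (ret p) * sz_inputs vs + ecost (ret p)"
      by linarith
  qed
qed

theorem lemma3:
  fixes T :: "nat \<Rightarrow> nat"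
  assumes "\<forall>n. T n \<ge> n"
  shows "((\<forall>p. well_typed p \<longrightarrow> bigO_run T p (\<lambda>v c m. c))
          \<longleftrightarrow> (\<forall>p. well_typed p \<longrightarrow> bigO_run T p (\<lambda>v c m. sz_int v)))
       \<and> ((\<forall>p. well_typed p \<longrightarrow> bigO_run T p (\<lambda>v c m. sz_int v))
          \<longleftrightarrow> (\<forall>p. well_typed p \<longrightarrow> bigO_run T p (\<lambda>v c m. m)))"
  using bigO_size_if_bigO_cost[OF assms] bigO_output_if_bigO_size[OF assms]
    bigO_cost_if_bigO_outputs[OF assms] by blast

end
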